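(* Let $Y$ be an unbounded connected graph and suppose at least one of the following holds: (a) $Y$ has linear growth; (b) $Y$ is uniformly locally finite and quasi-isometric to a tree with finitely many ends. Then $Y$ is narrow.
   Context: $Y$ carries the path metric on its vertex set with edges of length 1; $B_Y(y,r)$ is the set of vertices at distance at most $r$ from $y$. Linear growth: there exist $C\ge1$ and a vertex $y_0$ with $|B_Y(y_0,n)|\le Cn$ for all $n\in\mathbb N$. A vertex subset $Z$ is $\mu$-coarsely connected ($\mu\ge1$) if any two points of $Z$ are joined by a finite chain of points of $Z$ with consecutive distances at most $\mu$. $Y$ is narrow if for each $\mu\ge1$ there is $L(\mu)\ge1$ such that whenever $Y_1,\dots,Y_{L(\mu)+1}$ are unbounded $\mu$-coarsely connected vertex subsets, some $Y_i\cap Y_j\ne\emptyset$ with $i\ne j$. *)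

theory Defs
  imports Complex_Main
begin

text \<open>A graph is given by its vertex type (all elements of the type are vertices)
  and a symmetric adjacency relation E.\<close>

definition is_walk :: "('a \<Rightarrow> 'a \<Rightarrow> bool) \<Rightarrow> 'a list \<Rightarrow> bool" where
  "is_walk E xs \<longleftrightarrow> xs \<noteq> [] \<and> (\<forall>i. Suc i < length xs \<longrightarrow> E (xs ! i) (xs ! Suc i))"

definition graph_connected :: "('a \<Rightarrow> 'a \<Rightarrow> bool) \<Rightarrow> bool" where
  "graph_connected E \<longleftrightarrow> (\<forall>x y. \<exists>xs. is_walk E xs \<and> hd xs = x \<and> last xs = y)"

text \<open>Path metric (edges of length 1); meaningful for connected graphs.\<close>
definition gdist :: "('a \<Rightarrow> 'a \<Rightarrow> bool) \<Rightarrow> 'a \<Rightarrow> 'a \<Rightarrow> nat" where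
  "gdist E x y = (LEAST n. \<exists>xs. is_walk E xs \<and> hd xs = x \<and> last xs = y \<and> length xs = Suc n)"

definition gball :: "('a \<Rightarrow> 'a \<Rightarrow> bool) \<Rightarrow> 'a \<Rightarrow> nat \<Rightarrow> 'a set" where
  "gball E y r = {z. gdist E y z \<le> r}"

definition bounded_set :: "('a \<Rightarrow> 'a \<Rightarrow> bool) \<Rightarrow> 'a set \<Rightarrow> bool" where
  "bounded_set E Z \<longleftrightarrow> (\<exists>r. \<forall>x\<in>Z. \<forall>y\<in>Z. gdist E x y \<le> r)"

definition graph_unbounded :: "('a \<Rightarrow> 'a \<Rightarrow> bool) \<Rightarrow> bool" where
  "graph_unbounded E \<longleftrightarrow> \<not> bounded_set E UNIV"

text \<open>Linear growth; \<open>\<nat>\<close> is read as the positive integers (for n = 0 the bound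
  C*0 = 0 is impossible since y0 is in its own ball).\<close>
definition linear_growth :: "('a \<Rightarrow> 'a \<Rightarrow> bool) \<Rightarrow> bool" where
  "linear_growth E \<longleftrightarrow> (\<exists>C::real. C \<ge> 1 \<and> (\<exists>y0. \<forall>n::nat. n \<ge> 1 \<longrightarrow>
      finite (gball E y0 n) \<and> real (card (gball E y0 n)) \<le> C * real n))"

definition coarsely_connected :: "('a \<Rightarrow> 'a \<Rightarrow> bool) \<Rightarrow> real \<Rightarrow> 'a set \<Rightarrow> bool" where
  "coarsely_connected E \<mu> Z \<longleftrightarrow> (\<forall>x\<in>Z. \<forall>y\<in>Z. \<exists>xs. xs \<noteq> [] \<and> hd xs = x \<and> last xs = y \<and>
      set xs \<subseteq> Z \<and> (\<forall>i. Suc i < length xs \<longrightarrow> real (gdist E (xs ! i) (xs ! Suc i)) \<le> \<mu>))"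

definition narrow :: "('a \<Rightarrow> 'a \<Rightarrow> bool) \<Rightarrow> bool" where
  "narrow E \<longleftrightarrow> (\<forall>\<mu>::real. \<mu> \<ge> 1 \<longrightarrow> (\<exists>L::nat. L \<ge> 1 \<and>
     (\<forall>Ys :: nat \<Rightarrow> 'a set.
        (\<forall>i \<le> L. \<not> bounded_set E (Ys i) \<and> coarsely_connected E \<mu> (Ys i)) \<longrightarrow>
        (\<exists>i \<le> L. \<exists>j \<le> L. i \<noteq> j \<and> Ys i \<inter> Ys j \<noteq> {}))))"

definition unif_locally_finite :: "('a \<Rightarrow> 'a \<Rightarrow> bool) \<Rightarrow> bool" where
  "unif_locally_finite E \<longleftrightarrow> (\<exists>N::nat. \<forall>v. finite {w. E v w} \<and> card {w. E v w} \<le> N)"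

definition has_cycle :: "('a \<Rightarrow> 'a \<Rightarrow> bool) \<Rightarrow> bool" where
  "has_cycle E \<longleftrightarrow> (\<exists>xs. is_walk E xs \<and> length xs \<ge> 3 \<and> distinct xs \<and> E (last xs) (hd xs))"

definition is_tree :: "('a \<Rightarrow> 'a \<Rightarrow> bool) \<Rightarrow> bool" where
  "is_tree T \<longleftrightarrow> symp T \<and> (\<forall>x. \<not> T x x) \<and> graph_connected T \<and> \<not> has_cycle T"

text \<open>Ends (Halin): equivalence classes of rays, two rays being equivalent if for every
  finite vertex set S they have tails in the same component of G - S.\<close>
definition is_ray :: "('a \<Rightarrow> 'a \<Rightarrow> bool) \<Rightarrow> (nat \<Rightarrow> 'a) \<Rightarrow> bool" where
  "is_ray G r \<longleftrightarrow> inj r \<and> (\<forall>i. G (r i) (r (Suc i)))"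

definition end_equiv :: "('a \<Rightarrow> 'a \<Rightarrow> bool) \<Rightarrow> (nat \<Rightarrow> 'a) \<Rightarrow> (nat \<Rightarrow> 'a) \<Rightarrow> bool" where
  "end_equiv G r s \<longleftrightarrow> (\<forall>S. finite S \<longrightarrow> (\<exists>n.
      (\<forall>k\<ge>n. r k \<notin> S \<and> s k \<notin> S) \<and>
      (\<exists>xs. is_walk G xs \<and> hd xs = r n \<and> last xs = s n \<and> set xs \<inter> S = {})))"

definition graph_ends :: "('a \<Rightarrow> 'a \<Rightarrow> bool) \<Rightarrow> (nat \<Rightarrow> 'a) set set" where
  "graph_ends G = {r. is_ray G r} // {(r, s). is_ray G r \<and> is_ray G s \<and> end_equiv G r s}"

definition quasi_isometric :: "('a \<Rightarrow> 'a \<Rightarrow> bool) \<Rightarrow> ('b \<Rightarrow> 'b \<Rightarrow> bool) \<Rightarrow> bool" where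
  "quasi_isometric E T \<longleftrightarrow> (\<exists>f :: 'a \<Rightarrow> 'b. \<exists>K::real. \<exists>C::real. K \<ge> 1 \<and> C \<ge> 0 \<and>
     (\<forall>x y. real (gdist E x y) / K - C \<le> real (gdist T (f x) (f y)) \<and>
            real (gdist T (f x) (f y)) \<le> K * real (gdist E x y) + C) \<and>
     (\<forall>t. \<exists>x. real (gdist T t (f x)) \<le> C))"

end

(*
  An unbounded mu-coarsely connected set Z that contains a point within distance n of a base
  point cannot jump over the annulus of width mu around the ball of radius n, so it meets every
  such annulus beyond n.

  Under linear growth, L + 1 disjoint such sets, each with a point in the ball of radius n,
  contribute (L + 1) M distinct points to the M annuli of width ceiling(mu) beyond n, all inside a
  ball of radius at most 2 M ceiling(mu), which has at most 2 C M ceiling(mu) points; so L + 1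
  is at most 2 C ceiling(mu).

  If f is a quasi-isometry to a tree rooted at a point of f(Y), then beyond a level r containing
  none of the base points each set must enter the subtree of some vertex a of depth r far enough
  to force a to have descendants of unbounded depth, and when it crosses into that subtree it
  passes within K mu + C of a. Distinct such "deep" vertices of the same depth carry inequivalent
  rays, so there are at most as many of them as ends, and by bounded degree only boundedly many
  points of Y map that close to a given vertex.
*)
theory Submission
  imports Defs
begin

definition walk_betw :: "('a \<Rightarrow> 'a \<Rightarrow> bool) \<Rightarrow> 'a \<Rightarrow> 'a list \<Rightarrow> 'a \<Rightarrow> bool" where
  "walk_betw G x xs y \<longleftrightarrow> is_walk G xs \<and> hd xs = x \<and> last xs = y"

lemma is_walk_Nil [simp]: "\<not> is_walk G []"
  by (simp add: is_walk_def)

lemma is_walk_singleton [simp]: "is_walk G [x]"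
  by (simp add: is_walk_def)

lemma is_walk_Cons_Cons [simp]: "is_walk G (x # y # xs) \<longleftrightarrow> G x y \<and> is_walk G (y # xs)"
  by (auto simp: is_walk_def nth_Cons less_Suc_eq_0_disj split: nat.splits)

lemma walk_betw_singleton [simp]: "walk_betw G x [z] y \<longleftrightarrow> z = x \<and> z = y"
  by (auto simp: walk_betw_def)

lemma walk_betw_Cons:
  "G x z \<Longrightarrow> walk_betw G z xs y \<Longrightarrow> walk_betw G x (x # xs) y"
  by (cases xs) (auto simp: walk_betw_def)

lemma walk_betw_length: "walk_betw G x xs y \<Longrightarrow> length xs = Suc (length xs - 1)"
  by (cases xs) (auto simp: walk_betw_def)

lemma walk_betw_append:
  assumes "walk_betw G x xs y" "walk_betw G y ys z"
  shows "walk_betw G x (xs @ tl ys) z"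
  using assms
proof (induction xs arbitrary: x)
  case (Cons u xs)
  show ?case
  proof (cases xs)
    case Nil
    with Cons.prems show ?thesis by (cases ys) (auto simp: walk_betw_def)
  next
    case (Cons v vs)
    with Cons.prems have "G u v" "walk_betw G v xs y" "u = x"
      by (auto simp: walk_betw_def)
    with Cons.IH Cons.prems show ?thesis by (auto intro: walk_betw_Cons)
  qed
qed (simp add: walk_betw_def)

lemma set_tl_subset: "set (tl xs) \<subseteq> set xs"
  by (cases xs) auto

lemma length_append_tl: "ys \<noteq> [] \<Longrightarrow> length (xs @ tl ys) = length xs + length ys - 1"
  by (cases ys) auto

lemma walk_betw_rev:
  assumes "symp G" "walk_betw G x xs y"
  shows "walk_betw G y (rev xs) x"
  using assms(2)
proof (induction xs arbitrary: x)
  case (Cons u xs)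
  show ?case
  proof (cases xs)
    case Nil
    with Cons.prems show ?thesis by (auto simp: walk_betw_def)
  next
    case (Cons v vs)
    with Cons.prems have "G v u" "walk_betw G v xs y" "u = x"
      using assms(1) by (auto simp: walk_betw_def dest: sympD)
    then have "walk_betw G y (rev xs @ tl [v, x]) x"
      using Cons.IH by (intro walk_betw_append) (auto simp: walk_betw_def)
    with \<open>u = x\<close> show ?thesis by simp
  qed
qed (simp add: walk_betw_def)

lemma walk_betw_take:
  assumes "walk_betw G x xs y" "n < length xs"
  shows "walk_betw G x (take (Suc n) xs) (xs ! n)"
proof -
  have "is_walk G (take (Suc n) xs)"
    using assms by (auto simp: walk_betw_def is_walk_def)
  moreover have "last (take (Suc n) xs) = xs ! n"
    using assms(2) by (simp add: take_Suc_conv_app_nth)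
  ultimately show ?thesis
    using assms by (auto simp: walk_betw_def hd_take)
qed

lemma walk_betw_drop:
  "walk_betw G x xs y \<Longrightarrow> n < length xs \<Longrightarrow> walk_betw G (xs ! n) (drop n xs) y"
  by (auto simp: walk_betw_def is_walk_def hd_drop_conv_nth)

lemma walk_betw_distinct:
  assumes "walk_betw G x xs y"
  obtains ys where "walk_betw G x ys y" "distinct ys" "set ys \<subseteq> set xs"
  using assms
proof (induction xs arbitrary: x thesis)
  case (Cons u xs)
  show ?case
  proof (cases xs)
    case Nil
    with Cons.prems(2) show ?thesis
      by (intro Cons.prems(1)[of "[u]"]) (auto simp: walk_betw_def)
  next
    case (Cons v vs)
    with Cons.prems(2) have uv: "G u v" "walk_betw G v xs y" "u = x"
      by (auto simp: walk_betw_def)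
    then obtain ys where ys: "walk_betw G v ys y" "distinct ys" "set ys \<subseteq> set xs"
      using Cons.IH by blast
    show ?thesis
    proof (cases "u \<in> set ys")
      case True
      then obtain ps qs where ys_eq: "ys = ps @ u # qs" by (meson split_list)
      have "walk_betw G u (drop (length ps) ys) y"
        using walk_betw_drop[OF ys(1), of "length ps"] ys_eq by simp
      moreover have "distinct (drop (length ps) ys)" "set (drop (length ps) ys) \<subseteq> set (u # xs)"
        using ys(2,3) set_drop_subset[of "length ps" ys] by auto
      ultimately show ?thesis
        using Cons.prems(1) uv(3) by blast
    next
      case False
      have "walk_betw G u (u # ys) y"
        using uv(1) ys(1) by (rule walk_betw_Cons)
      moreover have "distinct (u # ys)" "set (u # ys) \<subseteq> set (u # xs)"
        using False ys(2,3) by auto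
      ultimately show ?thesis
        using Cons.prems(1) uv(3) by blast
    qed
  qed
qed (simp add: walk_betw_def)

lemma list_crossing:
  assumes "xs \<noteq> []" "\<not> P (hd xs)" "P (last xs)"
  obtains i where "Suc i < length xs" "\<not> P (xs ! i)" "P (xs ! Suc i)"
  using assms
proof (induction xs arbitrary: thesis)
  case (Cons u xs)
  show ?case
  proof (cases xs)
    case Nil
    with Cons.prems show ?thesis by simp
  next
    case (Cons v vs)
    show ?thesis
    proof (cases "P v")
      case True
      then show ?thesis
        using Cons.prems \<open>xs = v # vs\<close> by (intro Cons.prems(1)[of 0]) auto
    next
      case False
      then obtain i where "Suc i < length xs" "\<not> P (xs ! i)" "P (xs ! Suc i)"
        using Cons.IH Cons.prems \<open>xs = v # vs\<close> by auto
      then show ?thesis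
        by (intro Cons.prems(1)[of "Suc i"]) auto
    qed
  qed
qed simp

definition geodesic :: "('a \<Rightarrow> 'a \<Rightarrow> bool) \<Rightarrow> 'a \<Rightarrow> 'a list \<Rightarrow> 'a \<Rightarrow> bool" where
  "geodesic G x g y \<longleftrightarrow> walk_betw G x g y \<and> length g = Suc (gdist G x y)"

locale connected_graph =
  fixes G :: "'a \<Rightarrow> 'a \<Rightarrow> bool"
  assumes sym: "symp G" and connected: "graph_connected G"
begin

lemma gdist_le_walk: "walk_betw G x xs y \<Longrightarrow> gdist G x y \<le> length xs - 1"
  unfolding gdist_def walk_betw_def
  by (rule Least_le) (metis walk_betw_def walk_betw_length)

lemma geodesic_exists: obtains g where "geodesic G x g y"
proof -
  obtain xs where "walk_betw G x xs y"
    using connected unfolding graph_connected_def walk_betw_def by blast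
  then have "\<exists>n xs. is_walk G xs \<and> hd xs = x \<and> last xs = y \<and> length xs = Suc n"
    by (metis walk_betw_def walk_betw_length)
  then have "\<exists>g. is_walk G g \<and> hd g = x \<and> last g = y \<and> length g = Suc (gdist G x y)"
    unfolding gdist_def by (rule LeastI_ex)
  then show ?thesis
    using that unfolding geodesic_def walk_betw_def by blast
qed

lemma gdist_self [simp]: "gdist G x x = 0"
  using gdist_le_walk[of x "[x]" x] by simp

lemma gdist_eq_0_iff [simp]: "gdist G x y = 0 \<longleftrightarrow> x = y"
proof
  assume "gdist G x y = 0"
  moreover obtain g where "geodesic G x g y"
    by (rule geodesic_exists)
  ultimately show "x = y"
    by (cases g) (auto simp: geodesic_def walk_betw_def)
qed simp

lemma gdist_commute: "gdist G x y = gdist G y x"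
proof -
  have le: "gdist G y x \<le> gdist G x y" for x y
  proof -
    obtain g where "geodesic G x g y"
      by (rule geodesic_exists)
    then show ?thesis
      using gdist_le_walk[OF walk_betw_rev[OF sym]] by (fastforce simp: geodesic_def)
  qed
  show ?thesis
    using le[of x y] le[of y x] by simp
qed

lemma gdist_triangle: "gdist G x z \<le> gdist G x y + gdist G y z"
proof -
  obtain g h where g: "geodesic G x g y" and h: "geodesic G y h z"
    by (meson geodesic_exists)
  then have "walk_betw G x (g @ tl h) z"
    unfolding geodesic_def by (blast intro: walk_betw_append)
  then show ?thesis
    using gdist_le_walk g h by (fastforce simp: geodesic_def length_append_tl)
qed

lemma gdist_eq_1_imp_edge:
  assumes "gdist G x y = 1" shows "G x y"
proof -
  obtain g where "geodesic G x g y"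
    by (rule geodesic_exists)
  with assms obtain u v where "g = [u, v]" "walk_betw G x g y"
    by (auto simp: geodesic_def length_Suc_conv)
  then show ?thesis
    by (auto simp: walk_betw_def)
qed

lemma geodesic_nth_gdist:
  assumes g: "geodesic G x g y" and i: "i \<le> gdist G x y"
  shows "gdist G x (g ! i) = i" "gdist G (g ! i) y = gdist G x y - i"
proof -
  have il: "i < length g" and w: "walk_betw G x g y"
    using g i by (auto simp: geodesic_def)
  have "gdist G x (g ! i) \<le> i"
    using gdist_le_walk[OF walk_betw_take[OF w il]] il by simp
  moreover have "gdist G (g ! i) y \<le> gdist G x y - i"
    using gdist_le_walk[OF walk_betw_drop[OF w il]] g by (simp add: geodesic_def)
  moreover have "gdist G x y \<le> gdist G x (g ! i) + gdist G (g ! i) y"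
    by (rule gdist_triangle)
  ultimately show "gdist G x (g ! i) = i" "gdist G (g ! i) y = gdist G x y - i"
    using i by linarith+
qed

lemma geodesic_set_gdist:
  assumes "geodesic G x g y" "v \<in> set g"
  shows "gdist G x v + gdist G v y = gdist G x y"
proof -
  obtain i where "i < length g" "v = g ! i"
    using assms(2) by (metis in_set_conv_nth)
  then show ?thesis
    using geodesic_nth_gdist[OF assms(1), of i] assms(1) by (auto simp: geodesic_def)
qed

lemma geodesic_avoids_far:
  assumes "geodesic G x g y" "gdist G x y < gdist G x a"
  shows "a \<notin> set g"
  using geodesic_set_gdist[OF assms(1)] assms(2) by fastforce

lemma gball_Suc_subset: "gball G y (Suc R) \<subseteq> gball G y R \<union> (\<Union>v\<in>gball G y R. {w. G v w})"
proof
  fix z assume z: "z \<in> gball G y (Suc R)"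
  show "z \<in> gball G y R \<union> (\<Union>v\<in>gball G y R. {w. G v w})"
  proof (cases "gdist G y z \<le> R")
    case False
    then have dz: "gdist G y z = Suc R"
      using z by (simp add: gball_def)
    obtain g where g: "geodesic G y g z"
      by (rule geodesic_exists)
    then have "gdist G y (g ! R) = R" "G (g ! R) z"
      using geodesic_nth_gdist[OF g, of R] dz by (auto intro: gdist_eq_1_imp_edge)
    then show ?thesis
      by (auto simp: gball_def)
  qed (simp add: gball_def)
qed

lemma finite_card_gball:
  assumes deg: "\<And>v. finite {w. G v w} \<and> card {w. G v w} \<le> N"
  shows "finite (gball G y R) \<and> card (gball G y R) \<le> (N + 1) ^ R"
proof (induction R)
  case 0
  have "gball G y 0 = {y}"
    by (auto simp: gball_def)
  then show ?case by simp
next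
  case (Suc R)
  let ?B = "gball G y R" and ?N = "\<Union>v\<in>gball G y R. {w. G v w}"
  have fin_N: "finite ?N"
    using Suc deg by auto
  have "card ?N \<le> (\<Sum>v\<in>?B. card {w. G v w})"
    by (rule card_UN_le) (use Suc in auto)
  also have "\<dots> \<le> card ?B * N"
    using deg sum_bounded_above[of ?B "\<lambda>v. card {w. G v w}" N] by auto
  finally have card_N: "card ?N \<le> card ?B * N" .
  have "card (gball G y (Suc R)) \<le> card (?B \<union> ?N)"
    by (rule card_mono[OF _ gball_Suc_subset]) (use fin_N Suc in blast)
  also have "\<dots> \<le> card ?B * (N + 1)"
    using card_Un_le[of ?B ?N] card_N by simp
  also have "\<dots> \<le> (N + 1) ^ R * (N + 1)"
    using Suc by (intro mult_right_mono) auto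
  also have "\<dots> = (N + 1) ^ Suc R"
    by simp
  finally show ?case
    using finite_subset[OF gball_Suc_subset] fin_N Suc by auto
qed

lemma unbounded_set_far:
  assumes "\<not> bounded_set G Y"
  obtains z where "z \<in> Y" "R < gdist G y0 z"
proof -
  obtain x y where xy: "x \<in> Y" "y \<in> Y" "2 * R < gdist G x y"
    using assms unfolding bounded_set_def by (meson not_le)
  have "gdist G x y \<le> gdist G x y0 + gdist G y0 y"
    by (rule gdist_triangle)
  then have "gdist G x y \<le> gdist G y0 x + gdist G y0 y"
    by (simp add: gdist_commute)
  with xy have "R < gdist G y0 x \<or> R < gdist G y0 y"
    by linarith
  with xy that show ?thesis
    by blast
qed

end

lemma coarsely_connected_crossing:
  assumes "coarsely_connected G \<mu> Y" "x \<in> Y" "y \<in> Y" "\<not> P x" "P y"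
  obtains u v where "u \<in> Y" "v \<in> Y" "\<not> P u" "P v" "real (gdist G u v) \<le> \<mu>"
proof -
  obtain xs where xs: "xs \<noteq> []" "hd xs = x" "last xs = y" "set xs \<subseteq> Y"
    and steps: "\<And>i. Suc i < length xs \<Longrightarrow> real (gdist G (xs ! i) (xs ! Suc i)) \<le> \<mu>"
    using assms(1-3) unfolding coarsely_connected_def by blast
  obtain i where "Suc i < length xs" "\<not> P (xs ! i)" "P (xs ! Suc i)"
    using list_crossing[of xs P] xs assms(4,5) by blast
  with xs(4) steps that show ?thesis
    by (meson Suc_lessD nth_mem subsetD)
qed

definition disjoint_coarse_family :: "('a \<Rightarrow> 'a \<Rightarrow> bool) \<Rightarrow> real \<Rightarrow> ('i \<Rightarrow> 'a set) \<Rightarrow> 'i set \<Rightarrow> bool" where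
  "disjoint_coarse_family G \<mu> Ys I \<longleftrightarrow>
     (\<forall>i\<in>I. \<not> bounded_set G (Ys i) \<and> coarsely_connected G \<mu> (Ys i)) \<and>
     pairwise (\<lambda>i j. disjnt (Ys i) (Ys j)) I"

lemma narrowI:
  assumes "\<And>\<mu>. \<mu> \<ge> 1 \<Longrightarrow> \<exists>B. \<forall>(Ys :: nat \<Rightarrow> 'a set) I.
             finite I \<longrightarrow> disjoint_coarse_family G \<mu> Ys I \<longrightarrow> card I \<le> B"
  shows "narrow G"
  unfolding narrow_def
proof (intro allI impI)
  fix \<mu> :: real assume "\<mu> \<ge> 1"
  then obtain B where B: "\<And>(Ys :: nat \<Rightarrow> 'a set) I. finite I \<Longrightarrow> disjoint_coarse_family G \<mu> Ys I \<Longrightarrow> card I \<le> B"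
    using assms by blast
  show "\<exists>L\<ge>(1::nat). \<forall>Ys. (\<forall>i\<le>L. \<not> bounded_set G (Ys i) \<and> coarsely_connected G \<mu> (Ys i)) \<longrightarrow>
               (\<exists>i\<le>L. \<exists>j\<le>L. i \<noteq> j \<and> Ys i \<inter> Ys j \<noteq> {})"
  proof (rule exI[where x = "Suc B"], intro conjI allI impI)
    fix Ys assume Ys: "\<forall>i\<le>Suc B. \<not> bounded_set G (Ys i) \<and> coarsely_connected G \<mu> (Ys i)"
    show "\<exists>i\<le>Suc B. \<exists>j\<le>Suc B. i \<noteq> j \<and> Ys i \<inter> Ys j \<noteq> {}"
    proof (rule ccontr)
      assume "\<not> ?thesis"
      then have "pairwise (\<lambda>i j. disjnt (Ys i) (Ys j)) {..Suc B}"
        by (auto simp: pairwise_def disjnt_def)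
      with Ys have "disjoint_coarse_family G \<mu> Ys {..Suc B}"
        by (simp add: disjoint_coarse_family_def)
      from B[OF _ this] show False
        by simp
    qed
  qed simp
qed

lemma card_le_card_if_disjoint_nonempty_subsets:
  assumes "finite S" "\<And>i. i \<in> I \<Longrightarrow> A i \<subseteq> S" "\<And>i. i \<in> I \<Longrightarrow> A i \<noteq> {}"
    and "pairwise (\<lambda>i j. disjnt (A i) (A j)) I"
  shows "card I \<le> card S"
proof -
  define g where "g i = (SOME x. x \<in> A i)" for i
  have g: "g i \<in> A i" if "i \<in> I" for i
    unfolding g_def using assms(3)[OF that] by (simp add: some_in_eq)
  have "inj_on g I"
    using g assms(4) by (intro inj_onI) (fastforce simp: pairwise_def disjnt_def)
  moreover have "g ` I \<subseteq> S"
    using g assms(2) by blast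
  ultimately show ?thesis
    using card_inj_on_le assms(1) by blast
qed

lemma nonempty_if_disjoint_coarse_family:
  "disjoint_coarse_family G \<mu> Ys I \<Longrightarrow> i \<in> I \<Longrightarrow> Ys i \<noteq> {}"
  by (auto simp: disjoint_coarse_family_def bounded_set_def)

lemma finite_family_common_bound:
  fixes h :: "'a \<Rightarrow> nat"
  assumes "finite I" "\<And>i. i \<in> I \<Longrightarrow> Ys i \<noteq> {}"
  shows "\<exists>n. \<forall>i\<in>I. \<exists>x\<in>Ys i. h x < n"
proof -
  have "\<forall>i\<in>I. \<exists>x. x \<in> Ys i"
    using assms(2) by blast
  then obtain b where b: "\<And>i. i \<in> I \<Longrightarrow> b i \<in> Ys i"
    by (metis bchoice)
  obtain n where "\<And>i. i \<in> I \<Longrightarrow> h (b i) < n"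
    using assms(1) finite_nat_set_iff_bounded[of "(\<lambda>i. h (b i)) ` I"] by auto
  with b show ?thesis
    by blast
qed

lemma annulus_index_unique:
  fixes n m k w d :: nat
  assumes "n + m * w < d" "d \<le> n + k * w + w" "n + k * w < d" "d \<le> n + m * w + w"
  shows "m = k"
proof -
  have "m * w < Suc k * w" "k * w < Suc m * w"
    using assms by simp_all
  then have "m < Suc k" "k < Suc m"
    by (meson mult_less_cancel2)+
  then show "m = k"
    by simp
qed

lemma card_le_card_mult_if_covered:
  assumes "inj_on g I" "g ` I \<subseteq> (\<Union>a\<in>U. Q a)" "finite U"
    and "\<And>a. a \<in> U \<Longrightarrow> finite (Q a) \<and> card (Q a) \<le> M"
  shows "card I \<le> card U * M"
proof -
  have "card I = card (g ` I)"
    using assms(1) by (simp add: card_image)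
  also have "\<dots> \<le> card (\<Union>a\<in>U. Q a)"
    using assms(2-4) by (intro card_mono) auto
  also have "\<dots> \<le> (\<Sum>a\<in>U. card (Q a))"
    using assms(3) by (rule card_UN_le)
  also have "\<dots> \<le> card U * M"
    using sum_bounded_above[of U "\<lambda>a. card (Q a)" M] assms(4) unfolding of_nat_id by blast
  finally show ?thesis .
qed

context connected_graph
begin

lemma coarsely_connected_meets_annulus:
  assumes "coarsely_connected G \<mu> Y" "\<not> bounded_set G Y" "x \<in> Y" "gdist G y0 x \<le> n"
  obtains p where "p \<in> Y" "n < gdist G y0 p" "real (gdist G y0 p) \<le> real n + \<mu>"
proof -
  obtain z where "z \<in> Y" "n < gdist G y0 z"
    using unbounded_set_far[OF assms(2)] by blast
  then obtain u v where uv: "u \<in> Y" "v \<in> Y" "\<not> n < gdist G y0 u" "n < gdist G y0 v"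
    "real (gdist G u v) \<le> \<mu>"
    using coarsely_connected_crossing[OF assms(1,3), of z "\<lambda>v. n < gdist G y0 v"] assms(4)
    by auto
  have "gdist G y0 v \<le> gdist G y0 u + gdist G u v"
    by (rule gdist_triangle)
  with uv that show ?thesis
    by fastforce
qed

lemma card_mult_le_card_gball:
  assumes fin: "finite (gball G y0 (n + M * w))" and w: "\<mu> \<le> real w"
    and fam: "disjoint_coarse_family G \<mu> Ys I"
    and base: "\<And>i. i \<in> I \<Longrightarrow> \<exists>x\<in>Ys i. gdist G y0 x \<le> n"
  shows "card I * M \<le> card (gball G y0 (n + M * w))"
proof -
  define A where "A = (\<lambda>(i, m). Ys i \<inter> {q. n + m * w < gdist G y0 q \<and> gdist G y0 q \<le> n + m * w + w})"
  have Ys: "\<And>i. i \<in> I \<Longrightarrow> \<not> bounded_set G (Ys i) \<and> coarsely_connected G \<mu> (Ys i)"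
    using fam by (simp add: disjoint_coarse_family_def)
  have "card (I \<times> {..<M}) \<le> card (gball G y0 (n + M * w))"
  proof (rule card_le_card_if_disjoint_nonempty_subsets[OF fin])
    fix im assume im: "im \<in> I \<times> {..<M}"
    then obtain i m where i: "im = (i, m)" "i \<in> I" "m < M"
      by blast
    have "n + m * w + w \<le> n + M * w"
      using i(3) mult_le_mono1[of "Suc m" M w] by simp
    then show "A im \<subseteq> gball G y0 (n + M * w)"
      by (auto simp: A_def gball_def i(1))
    obtain x where "x \<in> Ys i" "gdist G y0 x \<le> n"
      using base[OF i(2)] by blast
    then have "gdist G y0 x \<le> n + m * w"
      by linarith
    then obtain p where p: "p \<in> Ys i" "n + m * w < gdist G y0 p"
      "real (gdist G y0 p) \<le> real (n + m * w) + \<mu>"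
      using coarsely_connected_meets_annulus Ys[OF i(2)] \<open>x \<in> Ys i\<close> by metis
    then have "real (gdist G y0 p) \<le> real (n + m * w + w)"
      using w by simp
    with p show "A im \<noteq> {}"
      unfolding A_def i(1) of_nat_le_iff by auto
  next
    show "pairwise (\<lambda>im jk. disjnt (A im) (A jk)) (I \<times> {..<M})"
    proof (rule pairwiseI)
      fix im jk assume "im \<in> I \<times> {..<M}" "jk \<in> I \<times> {..<M}" "im \<noteq> jk"
      then obtain i j m k where ij: "i \<in> I" "j \<in> I" "im = (i, m)" "jk = (j, k)" "(i, m) \<noteq> (j, k)"
        by blast
      show "disjnt (A im) (A jk)"
      proof (cases "i = j")
        case True
        with ij(5) annulus_index_unique[of n m w _ k] show ?thesis
          unfolding A_def disjnt_def ij(3,4) by auto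
      next
        case False
        then have "disjnt (Ys i) (Ys j)"
          using fam ij(1,2) by (simp add: disjoint_coarse_family_def pairwise_def)
        then show ?thesis
          unfolding A_def disjnt_def ij(3,4) by auto
      qed
    qed
  qed
  then show ?thesis
    by (simp add: card_cartesian_product)
qed

lemma card_disjoint_coarse_family_le_linear:
  assumes growth: "\<And>n. n \<ge> 1 \<Longrightarrow> finite (gball G y0 n) \<and> real (card (gball G y0 n)) \<le> C * real n"
    and w: "1 \<le> w" "\<mu> \<le> real w"
    and fam: "finite I" "disjoint_coarse_family G \<mu> Ys I"
  shows "real (card I) \<le> 2 * C * real w"
proof -
  obtain n where n: "\<forall>i\<in>I. \<exists>x\<in>Ys i. gdist G y0 x < n"
    using finite_family_common_bound[OF fam(1)] nonempty_if_disjoint_coarse_family[OF fam(2)]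
    by blast
  define M where "M = Suc n"
  have R: "n + M * w \<ge> 1" "n + M * w \<le> 2 * M * w"
    using w(1) mult_le_mono2[of 1 w M] by (simp_all add: M_def)
  have "card I * M \<le> card (gball G y0 (n + M * w))"
    using growth[OF R(1)] w(2) fam(2) n by (intro card_mult_le_card_gball) (auto intro: less_imp_le)
  then have "real (card I) * real M \<le> C * real (n + M * w)"
    using growth[OF R(1)] by (metis of_nat_le_iff of_nat_mult order_trans)
  also have "\<dots> \<le> (2 * C * real w) * real M"
  proof -
    have "0 \<le> C * real (n + M * w)"
      using growth[OF R(1)] by (meson of_nat_0_le_iff order_trans)
    moreover have "0 < real (n + M * w)"
      using R(1) by (simp only: of_nat_0_less_iff)
    ultimately have "0 \<le> C"
      using mult_neg_pos[of C] by fastforce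
    moreover have "real (n + M * w) \<le> 2 * real M * real w"
      using R(2) by (metis of_nat_le_iff of_nat_mult of_nat_numeral)
    ultimately show ?thesis
      using mult_left_mono by (fastforce simp: algebra_simps)
  qed
  finally show ?thesis
    by (simp add: M_def)
qed

lemma narrow_if_linear_growth:
  assumes "linear_growth G"
  shows "narrow G"
proof (rule narrowI)
  obtain C y0 where growth: "\<And>n. n \<ge> 1 \<Longrightarrow> finite (gball G y0 n) \<and> real (card (gball G y0 n)) \<le> C * real n"
    using assms unfolding linear_growth_def by blast
  fix \<mu> :: real assume "\<mu> \<ge> 1"
  then have w: "1 \<le> nat \<lceil>\<mu>\<rceil>" "\<mu> \<le> real (nat \<lceil>\<mu>\<rceil>)"
    by linarith+
  have "card I \<le> nat \<lceil>2 * C * real (nat \<lceil>\<mu>\<rceil>)\<rceil>"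
    if "finite I" "disjoint_coarse_family G \<mu> Ys I" for I and Ys :: "nat \<Rightarrow> 'a set"
    using card_disjoint_coarse_family_le_linear[OF growth w that] by linarith
  then show "\<exists>B. \<forall>(Ys :: nat \<Rightarrow> 'a set) I. finite I \<longrightarrow> disjoint_coarse_family G \<mu> Ys I \<longrightarrow> card I \<le> B"
    by blast
qed

end

lemma has_cycle_if_detour:
  assumes "walk_betw G p xs c" "a \<notin> set xs" "G c a" "G a p" "p \<noteq> c"
  shows "has_cycle G"
proof -
  obtain ys where ys: "walk_betw G p ys c" "distinct ys" "set ys \<subseteq> set xs"
    using walk_betw_distinct[OF assms(1)] by blast
  have "walk_betw G p (ys @ tl [c, a]) a"
    by (rule walk_betw_append[OF ys(1)]) (use assms(3) in \<open>simp add: walk_betw_def\<close>)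
  moreover have "length ys \<noteq> 1"
    using ys(1) assms(5) by (auto simp: walk_betw_def length_Suc_conv)
  then have "length (ys @ [a]) \<ge> 3"
    using ys(1) walk_betw_length by fastforce
  ultimately show ?thesis
    unfolding has_cycle_def walk_betw_def
    using ys(2,3) assms(2,4) by (intro exI[of _ "ys @ [a]"]) auto
qed

locale rooted_tree = connected_graph T for T :: "'a \<Rightarrow> 'a \<Rightarrow> bool" +
  fixes root :: 'a
  assumes acyclic: "\<not> has_cycle T"
begin

definition depth :: "'a \<Rightarrow> nat" where
  "depth v = gdist T root v"

text \<open>\<open>a\<close> lies on a geodesic from the root to \<open>v\<close>.\<close>
definition ancestor :: "'a \<Rightarrow> 'a \<Rightarrow> bool" where
  "ancestor a v \<longleftrightarrow> depth a + gdist T a v = depth v"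

lemma depth_eq_0_iff [simp]: "depth v = 0 \<longleftrightarrow> v = root"
  by (auto simp: depth_def)

lemma ancestor_refl [simp]: "ancestor v v"
  by (simp add: ancestor_def)

lemma ancestor_root [simp]: "ancestor root v"
  by (simp add: ancestor_def depth_def)

lemma ancestor_depth_le: "ancestor a v \<Longrightarrow> depth a \<le> depth v"
  unfolding ancestor_def by linarith

lemma ancestor_trans: "ancestor a b \<Longrightarrow> ancestor b v \<Longrightarrow> ancestor a v"
  using gdist_triangle[of a v b] gdist_triangle[of root v a]
  unfolding ancestor_def depth_def by linarith

lemma ancestor_eq_if_depth_eq: "ancestor a v \<Longrightarrow> depth a = depth v \<Longrightarrow> a = v"
  unfolding ancestor_def by simp

lemma edge_if_ancestor_depth_Suc: "ancestor a v \<Longrightarrow> depth v = Suc (depth a) \<Longrightarrow> T a v"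
  unfolding ancestor_def by (simp add: gdist_eq_1_imp_edge)

lemma ancestor_if_on_root_geodesic:
  "geodesic T root g v \<Longrightarrow> a \<in> set g \<Longrightarrow> ancestor a v"
  using geodesic_set_gdist unfolding ancestor_def depth_def by simp

lemma ancestor_exists:
  assumes "n \<le> depth v"
  obtains a where "ancestor a v" "depth a = n"
proof -
  obtain g where g: "geodesic T root g v"
    by (rule geodesic_exists)
  show ?thesis
    by (rule that[of "g ! n"])
      (use geodesic_nth_gdist[OF g, of n] assms in \<open>auto simp: ancestor_def depth_def\<close>)
qed

lemma parent_exists:
  assumes "a \<noteq> root"
  obtains p where "T a p" "depth p < depth a"
proof -
  obtain p where p: "ancestor p a" "depth p = depth a - 1"
    using ancestor_exists[of "depth a - 1" a] by auto
  moreover have "depth a = Suc (depth p)"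
    using p(2) assms by (metis Suc_pred' depth_eq_0_iff not_gr0)
  ultimately show ?thesis
    using that edge_if_ancestor_depth_Suc sym by (metis lessI sympD)
qed

lemma child_towards:
  assumes "ancestor a y" "a \<noteq> y"
  obtains c where "T c a" "gdist T y c < gdist T y a" "depth a < depth c"
proof -
  obtain g where g: "geodesic T a g y"
    by (rule geodesic_exists)
  have "gdist T a y \<noteq> 0"
    using assms(2) by simp
  then have pos: "1 \<le> gdist T a y"
    by linarith
  have ac: "gdist T a (g ! 1) = 1" and cy: "gdist T (g ! 1) y = gdist T a y - 1"
    using geodesic_nth_gdist[OF g pos] by simp_all
  have "depth y \<le> depth (g ! 1) + gdist T (g ! 1) y"
    unfolding depth_def by (rule gdist_triangle)
  with assms(1) cy pos have "depth a < depth (g ! 1)"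
    unfolding ancestor_def by linarith
  moreover have "T (g ! 1) a"
    using gdist_eq_1_imp_edge[OF ac] sym by (simp add: sympD)
  moreover have "gdist T y (g ! 1) < gdist T y a"
    using cy pos by (simp add: gdist_commute)
  ultimately show ?thesis
    using that by blast
qed

text \<open>If a walk from outside the subtree of \<open>a\<close> into it avoided \<open>a\<close>, it could be closed up
  through the root, the parent \<open>p\<close> of \<open>a\<close>, \<open>a\<close> itself and the child \<open>c\<close> of \<open>a\<close> towards the
  target into a cycle.\<close>
lemma ancestor_on_walk:
  assumes "ancestor a y" "\<not> ancestor a x" "walk_betw T x w y"
  shows "a \<in> set w"
proof (rule ccontr)
  assume a_w: "a \<notin> set w"
  have "a \<noteq> root"
    using assms(2) by auto
  then obtain p where p: "T a p" "depth p < depth a"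
    by (rule parent_exists)
  have "y \<in> set w"
    using assms(3) by (metis walk_betw_def is_walk_def last_in_set)
  then obtain c where c: "T c a" "gdist T y c < gdist T y a" "depth a < depth c"
    using child_towards[OF assms(1)] a_w by blast
  obtain g1 g2 g3 where g1: "geodesic T root g1 p" and g2: "geodesic T root g2 x"
    and g3: "geodesic T y g3 c"
    by (meson geodesic_exists)
  have "a \<notin> set g1"
    using geodesic_avoids_far[OF g1] p(2) by (simp add: depth_def)
  moreover have "a \<notin> set g2"
    using ancestor_if_on_root_geodesic[OF g2] assms(2) by blast
  moreover have "a \<notin> set g3"
    using geodesic_avoids_far[OF g3] c(2) by blast
  ultimately have a_W: "a \<notin> set (((rev g1 @ tl g2) @ tl w) @ tl g3)"
    using a_w set_tl_subset[of g2] set_tl_subset[of w] set_tl_subset[of g3] by auto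
  have "walk_betw T root g1 p" "walk_betw T root g2 x" "walk_betw T y g3 c"
    using g1 g2 g3 by (simp_all add: geodesic_def)
  then have "walk_betw T p (((rev g1 @ tl g2) @ tl w) @ tl g3) c"
    using assms(3) walk_betw_rev[OF sym] by (meson walk_betw_append)
  then have "has_cycle T"
    using a_W c(1) p(1) by (rule has_cycle_if_detour) (use c(3) p(2) in auto)
  with acyclic show False ..
qed

lemma gdist_through_ancestor:
  assumes "ancestor a y" "\<not> ancestor a x"
  shows "gdist T x y = gdist T x a + gdist T a y"
proof -
  obtain g where g: "geodesic T x g y"
    by (rule geodesic_exists)
  then have "a \<in> set g"
    using ancestor_on_walk[OF assms] by (simp add: geodesic_def)
  then show ?thesis
    using geodesic_set_gdist[OF g] by simp
qed

lemma ancestor_unique: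
  assumes "ancestor a v" "ancestor b v" "depth a = depth b"
  shows "a = b"
proof (rule ccontr)
  assume "a \<noteq> b"
  then have "\<not> ancestor a b"
    using ancestor_eq_if_depth_eq assms(3) by blast
  then have "gdist T b v = gdist T b a + gdist T a v"
    using gdist_through_ancestor[OF assms(1)] by blast
  moreover have "gdist T a v = gdist T b v"
    using assms unfolding ancestor_def by linarith
  ultimately show False
    using \<open>a \<noteq> b\<close> by simp
qed

lemma ancestor_of_ancestor:
  assumes "ancestor a v" "ancestor b v" "depth a \<le> depth b"
  shows "ancestor a b"
proof -
  obtain a' where a': "ancestor a' b" "depth a' = depth a"
    using ancestor_exists[OF assms(3)] by blast
  then have "a' = a"
    using ancestor_unique ancestor_trans[OF a'(1) assms(2)] assms(1) by blast
  with a' show ?thesis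
    by simp
qed

lemma gdist_ge_if_distinct_ancestors:
  assumes "ancestor a t" "ancestor b t'" "depth a = depth b" "a \<noteq> b"
  shows "depth t - depth a \<le> gdist T t t'"
proof -
  have "\<not> ancestor a t'"
    using ancestor_unique[OF _ assms(2,3)] assms(4) by blast
  then have "gdist T t' t = gdist T t' a + gdist T a t"
    using gdist_through_ancestor[OF assms(1)] by blast
  then show ?thesis
    using assms(1) unfolding ancestor_def by (simp add: gdist_commute)
qed

text \<open>Removing \<open>a\<close> and \<open>b\<close> separates the two rays.\<close>
lemma not_end_equiv_if_distinct_ancestors:
  assumes "\<And>n. ancestor a (r n)" "\<And>n. ancestor b (s n)" "depth a = depth b" "a \<noteq> b"
  shows "\<not> end_equiv T r s"
proof
  assume "end_equiv T r s"
  then obtain n xs where xs: "walk_betw T (r n) xs (s n)" "set xs \<inter> {a, b} = {}"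
    unfolding end_equiv_def walk_betw_def by (meson finite.emptyI finite_insert)
  have "\<not> ancestor a (s n)"
    using ancestor_unique[OF _ assms(2) assms(3)] assms(4) by blast
  then have "a \<in> set (rev xs)"
    using ancestor_on_walk[OF assms(1) _ walk_betw_rev[OF sym xs(1)]] by blast
  with xs(2) show False
    by auto
qed

definition deep :: "'a \<Rightarrow> bool" where
  "deep a \<longleftrightarrow> (\<forall>D. \<exists>v. ancestor a v \<and> D \<le> depth v)"

end

lemma end_equiv_refl:
  assumes "is_ray G r"
  shows "end_equiv G r r"
  unfolding end_equiv_def
proof (intro allI impI)
  fix S :: "'a set" assume "finite S"
  then have "finite (r -` S)"
    using assms finite_vimageI unfolding is_ray_def by blast
  then obtain n where "\<forall>k\<in>r -` S. k < n"
    using finite_nat_set_iff_bounded by blast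
  then have "\<forall>k\<ge>n. r k \<notin> S"
    by (meson leD vimageI2)
  then show "\<exists>n. (\<forall>k\<ge>n. r k \<notin> S \<and> r k \<notin> S) \<and>
             (\<exists>xs. is_walk G xs \<and> hd xs = r n \<and> last xs = r n \<and> set xs \<inter> S = {})"
    by (intro exI[of _ n] conjI exI[of _ "[r n]"]) auto
qed

text \<open>The tree may have vertices of infinite degree; this coarse substitute for local finiteness
  is what a quasi-isometry to a graph of bounded degree provides.\<close>
locale rooted_tree_finite_branching = rooted_tree +
  fixes s :: nat
  assumes finite_branching: "\<And>r. finite {a. depth a = r \<and> (\<exists>v. ancestor a v \<and> r + s \<le> depth v)}"
begin

lemma shallow_subtrees_bounded:
  obtains D where "\<And>a v. depth a = r \<Longrightarrow> \<not> deep a \<Longrightarrow> ancestor a v \<Longrightarrow> depth v < r + D"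
proof -
  define F where "F = {a. depth a = r \<and> (\<exists>v. ancestor a v \<and> r + s \<le> depth v)}"
  have "\<forall>a. \<exists>B. \<not> deep a \<longrightarrow> (\<forall>v. ancestor a v \<longrightarrow> depth v < B)"
    unfolding deep_def by (meson not_le)
  then obtain bound where bound: "\<And>a v. \<not> deep a \<Longrightarrow> ancestor a v \<Longrightarrow> depth v < bound a"
    by metis
  have "depth v < r + (s + (\<Sum>c\<in>F. bound c))"
    if "depth a = r" "\<not> deep a" "ancestor a v" for a v
  proof (cases "a \<in> F")
    case True
    then have "bound a \<le> (\<Sum>c\<in>F. bound c)"
      using finite_branching by (simp add: F_def member_le_sum)
    with bound[OF that(2,3)] show ?thesis
      by linarith
  next
    case False
    with that show ?thesis
      unfolding F_def by fastforce
  qed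
  with that show ?thesis
    by blast
qed

lemma deep_child:
  assumes "deep a"
  obtains c where "ancestor a c" "depth c = Suc (depth a)" "deep c"
proof -
  obtain D where D: "\<And>c v. depth c = Suc (depth a) \<Longrightarrow> \<not> deep c \<Longrightarrow> ancestor c v \<Longrightarrow>
      depth v < Suc (depth a) + D"
    using shallow_subtrees_bounded[where r = "Suc (depth a)"] by blast
  obtain v where v: "ancestor a v" "Suc (depth a) + D \<le> depth v"
    using assms unfolding deep_def by blast
  then obtain c where c: "ancestor c v" "depth c = Suc (depth a)"
    using ancestor_exists[of "Suc (depth a)" v] by auto
  with v D[OF c(2) _ c(1)] show ?thesis
    using that ancestor_of_ancestor[OF v(1) c(1)] by fastforce
qed

lemma deep_ray:
  assumes "deep a"
  shows "\<exists>\<rho>. is_ray T \<rho> \<and> (\<forall>n. ancestor a (\<rho> n))"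
proof -
  have "\<forall>c. \<exists>c'. deep c \<longrightarrow> ancestor c c' \<and> depth c' = Suc (depth c) \<and> deep c'"
    using deep_child by metis
  then obtain child where child: "\<And>c. deep c \<Longrightarrow>
      ancestor c (child c) \<and> depth (child c) = Suc (depth c) \<and> deep (child c)"
    using choice by metis
  define \<rho> where "\<rho> n = (child ^^ n) a" for n
  have \<rho>: "deep (\<rho> n) \<and> depth (\<rho> n) = depth a + n \<and> ancestor a (\<rho> n)" for n
    by (induction n) (use assms child ancestor_trans in \<open>auto simp: \<rho>_def\<close>)
  have step: "\<rho> (Suc n) = child (\<rho> n)" for n
    by (simp add: \<rho>_def)
  have "is_ray T \<rho>"
    unfolding is_ray_def
  proof
    show "inj \<rho>"
      by (rule injI) (metis \<rho> add_left_cancel)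
    show "\<forall>n. T (\<rho> n) (\<rho> (Suc n))"
      using \<rho> child step edge_if_ancestor_depth_Suc by metis
  qed
  with \<rho> show ?thesis
    by blast
qed

lemma card_deep_level_le_card_ends:
  assumes "finite (graph_ends T)"
  shows "finite {a. depth a = r \<and> deep a} \<and> card {a. depth a = r \<and> deep a} \<le> card (graph_ends T)"
proof -
  let ?U = "{a. depth a = r \<and> deep a}"
  define R where "R = {(\<rho>, \<sigma>). is_ray T \<rho> \<and> is_ray T \<sigma> \<and> end_equiv T \<rho> \<sigma>}"
  obtain ray where ray: "\<And>a. deep a \<Longrightarrow> is_ray T (ray a) \<and> (\<forall>n. ancestor a (ray a n))"
    using deep_ray by metis
  define end_of where "end_of a = R `` {ray a}" for a
  have "end_of a \<in> graph_ends T" if "deep a" for a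
    unfolding graph_ends_def end_of_def R_def by (rule quotientI) (use ray[OF that] in simp)
  then have img: "end_of ` ?U \<subseteq> graph_ends T"
    by blast
  have inj: "inj_on end_of ?U"
  proof (rule inj_onI)
    fix a b assume a: "a \<in> ?U" and b: "b \<in> ?U" and eq: "end_of a = end_of b"
    have "ray a \<in> end_of a"
      unfolding end_of_def R_def using ray end_equiv_refl a by auto
    then have "ray a \<in> end_of b"
      using eq by simp
    then have "end_equiv T (ray b) (ray a)"
      unfolding end_of_def R_def by auto
    then show "a = b"
      using not_end_equiv_if_distinct_ancestors[of b "ray b" a "ray a"] ray a b by auto
  qed
  show ?thesis
    using inj_on_finite[OF inj img assms] card_inj_on_le[OF inj img assms] by blast
qed

end

locale quasi_isometry_to_tree =
  E: connected_graph E + T: rooted_tree T "f x0"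
  for E :: "'a \<Rightarrow> 'a \<Rightarrow> bool" and T :: "'b \<Rightarrow> 'b \<Rightarrow> bool" and f :: "'a \<Rightarrow> 'b" and x0 :: 'a +
  fixes K C :: real and N :: nat
  assumes degree: "\<And>v. finite {w. E v w} \<and> card {w. E v w} \<le> N"
    and K_ge_1: "K \<ge> 1"
    and lower: "\<And>x y. real (gdist E x y) \<le> K * (real (gdist T (f x) (f y)) + C)"
    and upper: "\<And>x y. real (gdist T (f x) (f y)) \<le> K * real (gdist E x y) + C"
    and coarsely_onto: "\<And>t. \<exists>x. real (gdist T t (f x)) \<le> C"
begin

lemma gball_if_image_gdist_le:
  assumes "real (gdist T (f x) (f y)) \<le> \<delta>"
  shows "y \<in> gball E x (nat \<lceil>K * (\<delta> + C)\<rceil>)"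
proof -
  have "K * (real (gdist T (f x) (f y)) + C) \<le> K * (\<delta> + C)"
    using assms K_ge_1 by (intro mult_left_mono) auto
  with lower[of x y] have "real (gdist E x y) \<le> K * (\<delta> + C)"
    by linarith
  also have "\<dots> \<le> real (nat \<lceil>K * (\<delta> + C)\<rceil>)"
    by (rule real_nat_ceiling_ge)
  finally show ?thesis
    by (simp add: gball_def)
qed

lemma finite_if_separated:
  assumes depth: "\<And>t. t \<in> W \<Longrightarrow> T.depth t \<le> R"
    and separated: "\<And>t t'. t \<in> W \<Longrightarrow> t' \<in> W \<Longrightarrow> t \<noteq> t' \<Longrightarrow> 2 * C < real (gdist T t t')"
  shows "finite W"
proof -
  define g where "g t = (SOME x. real (gdist T t (f x)) \<le> C)" for t
  have g: "real (gdist T t (f (g t))) \<le> C" for t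
    unfolding g_def by (rule someI_ex) (rule coarsely_onto)
  have "inj_on g W"
  proof (rule inj_onI)
    fix t t' assume tW: "t \<in> W" "t' \<in> W" and eq: "g t = g t'"
    have "gdist T t t' \<le> gdist T t (f (g t)) + gdist T (f (g t)) t'"
      by (rule T.gdist_triangle)
    with g[of t] g[of t'] eq have "real (gdist T t t') \<le> 2 * C"
      by (simp add: T.gdist_commute)
    with separated tW show "t = t'"
      by force
  qed
  moreover have "g ` W \<subseteq> gball E x0 (nat \<lceil>K * (real R + C + C)\<rceil>)"
  proof (intro image_subsetI gball_if_image_gdist_le)
    fix t assume "t \<in> W"
    have "gdist T (f x0) (f (g t)) \<le> T.depth t + gdist T t (f (g t))"
      unfolding T.depth_def by (rule T.gdist_triangle)
    with g[of t] depth[OF \<open>t \<in> W\<close>] show "real (gdist T (f x0) (f (g t))) \<le> real R + C"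
      by linarith
  qed
  then have "finite (g ` W)"
    using E.finite_card_gball[OF degree] finite_subset by blast
  ultimately show ?thesis
    using finite_imageD by blast
qed

text \<open>Descendants at depth \<open>r + s\<close> of distinct vertices of depth \<open>r\<close> are at least \<open>s > 2 C\<close> apart,
  and separated sets of bounded depth are finite.\<close>
lemma finite_branching:
  "finite {a. T.depth a = r \<and> (\<exists>v. T.ancestor a v \<and> r + (nat \<lceil>2 * C\<rceil> + 1) \<le> T.depth v)}"
  (is "finite ?A")
proof -
  let ?s = "nat \<lceil>2 * C\<rceil> + 1"
  have "\<forall>a\<in>?A. \<exists>w. T.ancestor a w \<and> T.depth w = r + ?s"
  proof
    fix a assume "a \<in> ?A"
    then obtain v where a: "T.depth a = r" "T.ancestor a v" "r + ?s \<le> T.depth v"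
      by blast
    obtain w where w: "T.ancestor w v" "T.depth w = r + ?s"
      using T.ancestor_exists[OF a(3)] by blast
    have "T.ancestor a w"
      using T.ancestor_of_ancestor[OF a(2) w(1)] a(1) w(2) by simp
    with w(2) show "\<exists>w. T.ancestor a w \<and> T.depth w = r + ?s"
      by blast
  qed
  then have "\<exists>below. \<forall>a\<in>?A. T.ancestor a (below a) \<and> T.depth (below a) = r + ?s"
    by (rule bchoice)
  then obtain below where "\<forall>a\<in>?A. T.ancestor a (below a) \<and> T.depth (below a) = r + ?s"
    by blast
  then have below: "\<And>a. a \<in> ?A \<Longrightarrow> T.ancestor a (below a) \<and> T.depth (below a) = r + ?s"
    by blast
  have below_injective: "a = b" if "a \<in> ?A" "b \<in> ?A" "below a = below b" for a b
  proof (rule T.ancestor_unique)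
    show "T.ancestor a (below a)" "T.ancestor b (below a)"
      using below[OF that(1)] below[OF that(2)] that(3) by simp_all
    show "T.depth a = T.depth b"
      using that(1,2) by simp
  qed
  then have "inj_on below ?A"
    by (intro inj_onI)
  moreover have "finite (below ` ?A)"
  proof (rule finite_if_separated)
    show "T.depth t \<le> r + ?s" if "t \<in> below ` ?A" for t
      using that below by fastforce
    fix t t' assume "t \<in> below ` ?A" "t' \<in> below ` ?A" "t \<noteq> t'"
    then obtain a b where ab: "a \<in> ?A" "b \<in> ?A" "t = below a" "t' = below b" "a \<noteq> b"
      by blast
    then have "?s \<le> gdist T t t'"
      using T.gdist_ge_if_distinct_ancestors[of a t b t'] below[OF ab(1)] below[OF ab(2)] by simp
    then show "2 * C < real (gdist T t t')"
      by linarith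
  qed
  ultimately show ?thesis
    using finite_imageD by blast
qed

sublocale T: rooted_tree_finite_branching T "f x0" "nat \<lceil>2 * C\<rceil> + 1"
  by unfold_locales (rule finite_branching)

lemma card_near_vertex:
  "finite {x. real (gdist T (f x) a) \<le> \<delta>} \<and>
   card {x. real (gdist T (f x) a) \<le> \<delta>} \<le> (N + 1) ^ nat \<lceil>K * (2 * \<delta> + C)\<rceil>"
  (is "finite ?Q \<and> card ?Q \<le> _")
proof (cases "?Q = {}")
  case False
  then obtain x1 where x1: "x1 \<in> ?Q"
    by blast
  have "?Q \<subseteq> gball E x1 (nat \<lceil>K * (2 * \<delta> + C)\<rceil>)"
  proof
    fix x assume "x \<in> ?Q"
    moreover have "gdist T (f x1) (f x) \<le> gdist T (f x1) a + gdist T a (f x)"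
      by (rule T.gdist_triangle)
    ultimately have "real (gdist T (f x1) (f x)) \<le> 2 * \<delta>"
      using x1 by (simp add: T.gdist_commute[of a])
    then show "x \<in> gball E x1 (nat \<lceil>K * (2 * \<delta> + C)\<rceil>)"
      by (rule gball_if_image_gdist_le)
  qed
  then show ?thesis
    using E.finite_card_gball[OF degree] by (meson card_mono finite_subset le_trans)
qed simp

lemma coarsely_connected_near_deep_vertex:
  assumes Y: "coarsely_connected E \<mu> Y" "\<not> bounded_set E Y" and x: "x \<in> Y" "T.depth (f x) < r"
  obtains y a where "y \<in> Y" "T.depth a = r" "T.deep a" "real (gdist T (f y) a) \<le> K * \<mu> + C"
proof -
  obtain D where D: "\<And>a v. T.depth a = r \<Longrightarrow> \<not> T.deep a \<Longrightarrow> T.ancestor a v \<Longrightarrow> T.depth v < r + D"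
    using T.shallow_subtrees_bounded[where r = r] by blast
  obtain z where z: "z \<in> Y" "nat \<lceil>K * (real (r + D) + C)\<rceil> < gdist E x0 z"
    using E.unbounded_set_far[OF Y(2)] by blast
  have "K * (real (r + D) + C) < real (gdist E x0 z)"
    using z(2) real_nat_ceiling_ge[of "K * (real (r + D) + C)"] by linarith
  also have "\<dots> \<le> K * (real (T.depth (f z)) + C)"
    using lower[of x0 z] by (simp add: T.depth_def)
  finally have deep_z: "r + D \<le> T.depth (f z)"
    using K_ge_1 by simp
  then obtain a where a: "T.ancestor a (f z)" "T.depth a = r"
    using T.ancestor_exists[of r "f z"] by auto
  have "T.deep a"
    using D[OF a(2) _ a(1)] deep_z by fastforce
  have "\<not> T.ancestor a (f x)"
    using T.ancestor_depth_le a(2) x(2) by fastforce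
  then obtain u v where uv: "u \<in> Y" "v \<in> Y" "\<not> T.ancestor a (f u)" "T.ancestor a (f v)"
    "real (gdist E u v) \<le> \<mu>"
    using coarsely_connected_crossing[OF Y(1) x(1) z(1), of "\<lambda>v. T.ancestor a (f v)"] a(1) by blast
  have "gdist T (f u) (f v) = gdist T (f u) a + gdist T a (f v)"
    using T.gdist_through_ancestor[OF uv(4,3)] .
  moreover have "real (gdist T (f u) (f v)) \<le> K * \<mu> + C"
    using upper[of u v] mult_left_mono[OF uv(5), of K] K_ge_1 by linarith
  ultimately have "real (gdist T (f v) a) \<le> K * \<mu> + C"
    by (simp add: T.gdist_commute[of a])
  with uv(2) a(2) \<open>T.deep a\<close> that show ?thesis
    by blast
qed

lemma card_disjoint_coarse_family_le_tree:
  assumes ends: "finite (graph_ends T)" and fam: "finite I" "disjoint_coarse_family E \<mu> Ys I"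
  shows "card I \<le> card (graph_ends T) * (N + 1) ^ nat \<lceil>K * (2 * (K * \<mu> + C) + C)\<rceil>"
proof -
  let ?Q = "\<lambda>a. {x. real (gdist T (f x) a) \<le> K * \<mu> + C}"
  obtain r where r: "\<forall>i\<in>I. \<exists>x\<in>Ys i. T.depth (f x) < r"
    using finite_family_common_bound[OF fam(1), where Ys = Ys and h = "\<lambda>x. T.depth (f x)"]
      nonempty_if_disjoint_coarse_family[OF fam(2)] by blast
  let ?U = "{a. T.depth a = r \<and> T.deep a}"
  have "\<forall>i\<in>I. \<exists>y. y \<in> Ys i \<and> (\<exists>a\<in>?U. y \<in> ?Q a)"
  proof
    fix i assume i: "i \<in> I"
    then obtain x where x: "x \<in> Ys i" "T.depth (f x) < r"
      using r by blast
    have "coarsely_connected E \<mu> (Ys i)" "\<not> bounded_set E (Ys i)"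
      using fam(2) i by (simp_all add: disjoint_coarse_family_def)
    then obtain y a where "y \<in> Ys i" "T.depth a = r" "T.deep a" "real (gdist T (f y) a) \<le> K * \<mu> + C"
      using coarsely_connected_near_deep_vertex x by blast
    then show "\<exists>y. y \<in> Ys i \<and> (\<exists>a\<in>?U. y \<in> ?Q a)"
      by blast
  qed
  then have "\<exists>y. \<forall>i\<in>I. y i \<in> Ys i \<and> (\<exists>a\<in>?U. y i \<in> ?Q a)"
    by (rule bchoice)
  then obtain y where y: "\<forall>i\<in>I. y i \<in> Ys i \<and> (\<exists>a\<in>?U. y i \<in> ?Q a)"
    by blast
  have U: "finite ?U" "card ?U \<le> card (graph_ends T)"
    using T.card_deep_level_le_card_ends[OF ends] by blast+
  have "inj_on y I"
  proof (rule inj_onI)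
    fix i j assume ij: "i \<in> I" "j \<in> I" "y i = y j"
    then have "\<not> disjnt (Ys i) (Ys j)"
      using y unfolding disjnt_def by (metis disjoint_iff)
    with fam(2) ij show "i = j"
      unfolding disjoint_coarse_family_def pairwise_def by blast
  qed
  then have "card I \<le> card ?U * (N + 1) ^ nat \<lceil>K * (2 * (K * \<mu> + C) + C)\<rceil>"
  proof (rule card_le_card_mult_if_covered)
    show "y ` I \<subseteq> (\<Union>a\<in>?U. ?Q a)"
      using y by blast
    show "finite ?U"
      by (rule U(1))
    show "finite (?Q a) \<and> card (?Q a) \<le> (N + 1) ^ nat \<lceil>K * (2 * (K * \<mu> + C) + C)\<rceil>" for a
      by (rule card_near_vertex)
  qed
  also have "\<dots> \<le> card (graph_ends T) * (N + 1) ^ nat \<lceil>K * (2 * (K * \<mu> + C) + C)\<rceil>"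
    using U(2) by (rule mult_le_mono1)
  finally show ?thesis .
qed

lemma narrow_if_finite_ends:
  assumes "finite (graph_ends T)"
  shows "narrow E"
proof (rule narrowI)
  fix \<mu> :: real
  show "\<exists>B. \<forall>(Ys :: nat \<Rightarrow> 'a set) I. finite I \<longrightarrow> disjoint_coarse_family E \<mu> Ys I \<longrightarrow> card I \<le> B"
    using card_disjoint_coarse_family_le_tree[OF assms] by blast
qed

end

lemma narrow_if_quasi_isometric_to_tree:
  fixes E :: "'a \<Rightarrow> 'a \<Rightarrow> bool" and T :: "'b \<Rightarrow> 'b \<Rightarrow> bool"
  assumes "symp E" "graph_connected E" "unif_locally_finite E"
    and "is_tree T" "finite (graph_ends T)" "quasi_isometric E T"
  shows "narrow E"
proof -
  obtain N where N: "\<And>v. finite {w. E v w} \<and> card {w. E v w} \<le> N"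
    using assms(3) unfolding unif_locally_finite_def by blast
  obtain f :: "'a \<Rightarrow> 'b" and K C where K: "K \<ge> 1"
    and lo: "\<And>x y. real (gdist E x y) / K - C \<le> real (gdist T (f x) (f y))"
    and up: "\<And>x y. real (gdist T (f x) (f y)) \<le> K * real (gdist E x y) + C"
    and onto: "\<And>t. \<exists>x. real (gdist T t (f x)) \<le> C"
    using assms(6) unfolding quasi_isometric_def by blast
  have "real (gdist E x y) \<le> K * (real (gdist T (f x) (f y)) + C)" for x y
  proof -
    have "real (gdist E x y) / K \<le> real (gdist T (f x) (f y)) + C"
      using lo[of x y] by linarith
    then show ?thesis
      using K(1) by (simp add: pos_divide_le_eq mult.commute)
  qed
  then interpret quasi_isometry_to_tree E T f undefined K C N
    using assms(1,2,4) N K up onto by unfold_locales (auto simp: is_tree_def)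
  show ?thesis
    using narrow_if_finite_ends assms(5) by blast
qed

theorem mainTheorem7:
  fixes E :: "'a \<Rightarrow> 'a \<Rightarrow> bool"
  assumes "symp E"
    and "graph_connected E"
    and "graph_unbounded E"
    and "linear_growth E \<or>
         (unif_locally_finite E \<and>
          (\<exists>T :: 'b \<Rightarrow> 'b \<Rightarrow> bool. is_tree T \<and> finite (graph_ends T) \<and> quasi_isometric E T))"
  shows "narrow E"
proof -
  interpret connected_graph E
    using assms(1,2) by unfold_locales
  from assms(4) show ?thesis
    using narrow_if_linear_growth narrow_if_quasi_isometric_to_tree[OF assms(1,2)] by blast
qed

end
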